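(* Let $\mathcal{C}\subseteq\mathbb{F}^n$ be an $\mathbb{F}$-linear code of dimension $k$ and $\mathcal{L}\in\mathcal{P}(\mathbf{K}^{\mathbf{n}})$. Then $\mu_{\mathcal{C}}(\mathcal{L})+\rho_{\mathcal{C}}(\mathcal{L})=n-k$.
   Context: Setting: $\ell,n_1,\dots,n_\ell$ positive integers, $K_1,\dots,K_\ell$ finite fields with a common finite extension $\mathbb{F}$, $m_i=[\mathbb{F}:K_i]$, $n=\sum n_i$. $\mathcal{P}(\mathbf{K}^{\mathbf{n}})=\mathcal{P}(K_1^{n_1})\times\cdots\times\mathcal{P}(K_\ell^{n_\ell})$, $\mathcal{P}(K_i^{n_i})$ the lattice of $K_i$-subspaces of $K_i^{n_i}$, with componentwise inclusion and orthogonal complements (standard bilinear form). For $\mathbf{c}=(\mathbf{c}^{(1)},\dots,\mathbf{c}^{(\ell)})\in\mathbb{F}^n$, $\mathbf{c}^{(i)}\in\mathbb{F}^{n_i}$, let $\Gamma_i(\mathbf{c}^{(i)})$ be the $m_i\times n_i$ matrix over $K_i$ whose columns are the coordinate vectors of the entries of $\mathbf{c}^{(i)}$ w.r.t. a fixed basis of $\mathbb{F}/K_i$, and $\mathrm{supp}(\mathbf{c})=(E_1,\dots,E_\ell)$ with $E_i$ the row space of $\Gamma_i(\mathbf{c}^{(i)})$. $\mathcal{C}^\perp$ is the dual of $\mathcal{C}$ in $\mathbb{F}^n$. Define $\mathcal{C}(\mathcal{L})=\{\mathbf{c}\in\mathcal{C}^\perp:\mathrm{supp}(\mathbf{c})\subseteq\mathcal{L}^\perp\}$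 and $\mu_{\mathcal{C}}(\mathcal{L})=\dim_{\mathbb{F}}\mathcal{C}(\mathcal{L})$. For $\mathcal{L}=(\mathcal{L}_1,\dots,\mathcal{L}_\ell)$ with $N_i=\dim_{K_i}\mathcal{L}_i$, $N=\sum N_i$, let $\mathbf{A}_i$ be an $N_i\times n_i$ generator matrix of $\mathcal{L}_i$ over $K_i$, $\mathbf{A}=\mathrm{diag}(\mathbf{A}_1,\dots,\mathbf{A}_\ell)$, and $\Pi_{\mathcal{L}}:\mathbb{F}^n\to\mathbb{F}^N$, $\mathbf{x}\mapsto\mathbf{x}\mathbf{A}^T$. Define $\mathcal{C}_{\mathcal{L}}=\Pi_{\mathcal{L}}(\mathcal{C}^\perp)$ and $\rho_{\mathcal{C}}(\mathcal{L})=\dim_{\mathbb{F}}\mathcal{C}_{\mathcal{L}}$. *)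

theory Defs
  imports Complex_Main "HOL-Library.Function_Algebras"
begin

(* Ambient field F: a finite field type 'a. The fields K_i are subfields of F. *)
definition subfield :: "'a::field set \<Rightarrow> bool" where
  "subfield K \<longleftrightarrow> 0 \<in> K \<and> 1 \<in> K \<and>
     (\<forall>x\<in>K. \<forall>y\<in>K. x + y \<in> K \<and> x * y \<in> K) \<and>
     (\<forall>x\<in>K. - x \<in> K \<and> inverse x \<in> K)"

definition Kvec :: "'a::field set \<Rightarrow> nat \<Rightarrow> (nat \<Rightarrow> 'a) set" where
  "Kvec K m = {v. (\<forall>j. v j \<in> K) \<and> (\<forall>j\<ge>m. v j = 0)}"

definition Ksubspace :: "'a::field set \<Rightarrow> nat \<Rightarrow> (nat \<Rightarrow> 'a) set \<Rightarrow> bool" where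
  "Ksubspace K m V \<longleftrightarrow> V \<subseteq> Kvec K m \<and> (\<lambda>j. 0) \<in> V \<and>
     (\<forall>u\<in>V. \<forall>v\<in>V. (\<lambda>j. u j + v j) \<in> V) \<and>
     (\<forall>c\<in>K. \<forall>v\<in>V. (\<lambda>j. c * v j) \<in> V)"

definition Korth :: "'a::field set \<Rightarrow> nat \<Rightarrow> (nat \<Rightarrow> 'a) set \<Rightarrow> (nat \<Rightarrow> 'a) set" where
  "Korth K m V = {w \<in> Kvec K m. \<forall>v\<in>V. (\<Sum>j<m. w j * v j) = 0}"

definition is_Kbasis_F :: "'a::field set \<Rightarrow> (nat \<Rightarrow> 'a) \<Rightarrow> nat \<Rightarrow> bool" where
  "is_Kbasis_F K b m \<longleftrightarrow>
     (\<forall>a. (\<forall>r. a r \<in> K) \<longrightarrow> (\<Sum>r<m. a r * b r) = 0 \<longrightarrow> (\<forall>r<m. a r = 0)) \<and>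
     (\<forall>x. \<exists>a. (\<forall>r. a r \<in> K) \<and> x = (\<Sum>r<m. a r * b r))"

definition coord :: "'a::field set \<Rightarrow> (nat \<Rightarrow> 'a) \<Rightarrow> nat \<Rightarrow> 'a \<Rightarrow> nat \<Rightarrow> 'a" where
  "coord K b m x = (THE a. (\<forall>r. a r \<in> K) \<and> (\<forall>r\<ge>m. a r = 0) \<and> x = (\<Sum>r<m. a r * b r))"

definition Gamma :: "'a::field set \<Rightarrow> (nat \<Rightarrow> 'a) \<Rightarrow> nat \<Rightarrow> nat \<Rightarrow> (nat \<Rightarrow> 'a) \<Rightarrow> nat \<Rightarrow> nat \<Rightarrow> 'a" where
  "Gamma K b m nn v = (\<lambda>r j. if r < m \<and> j < nn then coord K b m (v j) r else 0)"

definition rowspace :: "'a::field set \<Rightarrow> nat \<Rightarrow> (nat \<Rightarrow> nat \<Rightarrow> 'a) \<Rightarrow> (nat \<Rightarrow> 'a) set" where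
  "rowspace K m G = {w. \<exists>a. (\<forall>r. a r \<in> K) \<and> w = (\<lambda>j. \<Sum>r<m. a r * G r j)}"

(* Coordinates of F^n, n = sum n_i, are indexed by pairs (i,j), i < l, j < n_i *)
definition Idx :: "nat \<Rightarrow> (nat \<Rightarrow> nat) \<Rightarrow> (nat \<times> nat) set" where
  "Idx l nn = {(i, j). i < l \<and> j < nn i}"

definition Fvec :: "nat \<Rightarrow> (nat \<Rightarrow> nat) \<Rightarrow> (nat \<times> nat \<Rightarrow> 'a::field) set" where
  "Fvec l nn = {x. \<forall>p. p \<notin> Idx l nn \<longrightarrow> x p = 0}"

definition block :: "(nat \<times> nat \<Rightarrow> 'a) \<Rightarrow> nat \<Rightarrow> nat \<Rightarrow> 'a" where
  "block x i = (\<lambda>j. x (i, j))"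

definition Fsubspace :: "('b \<Rightarrow> 'a::field) set \<Rightarrow> ('b \<Rightarrow> 'a) set \<Rightarrow> bool" where
  "Fsubspace S U \<longleftrightarrow> S \<subseteq> U \<and> (\<lambda>p. 0) \<in> S \<and>
     (\<forall>u\<in>S. \<forall>v\<in>S. (\<lambda>p. u p + v p) \<in> S) \<and>
     (\<forall>c. \<forall>v\<in>S. (\<lambda>p. c * v p) \<in> S)"

definition fscale :: "'a::field \<Rightarrow> ('b \<Rightarrow> 'a) \<Rightarrow> 'b \<Rightarrow> 'a" where
  "fscale c x = (\<lambda>p. c * x p)"

definition Fdim :: "('b \<Rightarrow> 'a::field) set \<Rightarrow> nat" where
  "Fdim S = vector_space.dim fscale S"

definition dual :: "nat \<Rightarrow> (nat \<Rightarrow> nat) \<Rightarrow> (nat \<times> nat \<Rightarrow> 'a::field) set \<Rightarrow> (nat \<times> nat \<Rightarrow> 'a) set" where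
  "dual l nn C = {x \<in> Fvec l nn. \<forall>c\<in>C. (\<Sum>p\<in>Idx l nn. x p * c p) = 0}"

definition supp_i :: "(nat \<Rightarrow> 'a::field set) \<Rightarrow> (nat \<Rightarrow> nat \<Rightarrow> 'a) \<Rightarrow> (nat \<Rightarrow> nat) \<Rightarrow> (nat \<Rightarrow> nat)
    \<Rightarrow> (nat \<times> nat \<Rightarrow> 'a) \<Rightarrow> nat \<Rightarrow> (nat \<Rightarrow> 'a) set" where
  "supp_i K B m nn c i = rowspace (K i) (m i) (Gamma (K i) (B i) (m i) (nn i) (block c i))"

definition CL :: "nat \<Rightarrow> (nat \<Rightarrow> nat) \<Rightarrow> (nat \<Rightarrow> 'a::field set) \<Rightarrow> (nat \<Rightarrow> nat \<Rightarrow> 'a) \<Rightarrow> (nat \<Rightarrow> nat)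
    \<Rightarrow> (nat \<times> nat \<Rightarrow> 'a) set \<Rightarrow> (nat \<Rightarrow> (nat \<Rightarrow> 'a) set) \<Rightarrow> (nat \<times> nat \<Rightarrow> 'a) set" where
  "CL l nn K B m C L = {c \<in> dual l nn C. \<forall>i<l. supp_i K B m nn c i \<subseteq> Korth (K i) (nn i) (L i)}"

definition mu :: "nat \<Rightarrow> (nat \<Rightarrow> nat) \<Rightarrow> (nat \<Rightarrow> 'a::field set) \<Rightarrow> (nat \<Rightarrow> nat \<Rightarrow> 'a) \<Rightarrow> (nat \<Rightarrow> nat)
    \<Rightarrow> (nat \<times> nat \<Rightarrow> 'a) set \<Rightarrow> (nat \<Rightarrow> (nat \<Rightarrow> 'a) set) \<Rightarrow> nat" where
  "mu l nn K B m C L = Fdim (CL l nn K B m C L)"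

definition is_gen_matrix :: "'a::field set \<Rightarrow> nat \<Rightarrow> (nat \<Rightarrow> 'a) set \<Rightarrow> nat \<Rightarrow> (nat \<Rightarrow> nat \<Rightarrow> 'a) \<Rightarrow> bool" where
  "is_gen_matrix K m V N A \<longleftrightarrow>
     (\<forall>r<N. A r \<in> Kvec K m) \<and> (\<forall>r\<ge>N. \<forall>j. A r j = 0) \<and>
     (\<forall>a. (\<forall>r. a r \<in> K) \<longrightarrow> (\<lambda>j. \<Sum>r<N. a r * A r j) = (\<lambda>j. 0) \<longrightarrow> (\<forall>r<N. a r = 0)) \<and>
     V = rowspace K N A"

(* Pi_L : F^n \<rightarrow> F^N, x \<mapsto> x A^T with A = diag(A_1,..,A_l); F^N indexed by (i,r), r < N_i *)
definition PiL :: "nat \<Rightarrow> (nat \<Rightarrow> nat) \<Rightarrow> (nat \<Rightarrow> nat) \<Rightarrow> (nat \<Rightarrow> nat \<Rightarrow> nat \<Rightarrow> 'a::field)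
    \<Rightarrow> (nat \<times> nat \<Rightarrow> 'a) \<Rightarrow> nat \<times> nat \<Rightarrow> 'a" where
  "PiL l nn N A x = (\<lambda>(i, r). if i < l \<and> r < N i then (\<Sum>j<nn i. x (i, j) * A i r j) else 0)"

definition rho :: "nat \<Rightarrow> (nat \<Rightarrow> nat) \<Rightarrow> (nat \<Rightarrow> nat) \<Rightarrow> (nat \<Rightarrow> nat \<Rightarrow> nat \<Rightarrow> 'a::field)
    \<Rightarrow> (nat \<times> nat \<Rightarrow> 'a) set \<Rightarrow> nat" where
  "rho l nn N A C = Fdim (PiL l nn N A ` dual l nn C)"

end

theory Submission
  imports Defs "HOL-Library.FuncSet" "HOL-Library.Cardinality"
begin

(* Over a finite field with q elements a subspace of dimension d has q^d elements, so every
   dimension identity can be proved by counting.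

   C(L) is the kernel of Pi_L on the dual code C^perp: supp(c)_i lies in L_i^perp iff every row of
   Gamma_i(c^(i)) is orthogonal to every row of A_i, and the K_i-valued products of these rows are
   exactly the coordinates of the F-valued product c^(i) . A_i,r in the basis of F/K_i. Counting
   the fibres of Pi_L on C^perp (rank-nullity) gives dim C^perp = mu(L) + rho(L).
   Finally dim C^perp = n - k: double counting the pairs (x, c) in F^n x C with x . c = 0, using
   that a nonzero linear functional has q^(n-1) zeros, gives |C^perp| |C| = q^n. *)

lemma vector_space_fscale: "vector_space (fscale :: 'a::field \<Rightarrow> ('b \<Rightarrow> 'a) \<Rightarrow> 'b \<Rightarrow> 'a)"
  by unfold_locales (auto simp: fscale_def fun_eq_iff algebra_simps)

interpretation fs: vector_space "fscale :: 'a::field \<Rightarrow> ('b \<Rightarrow> 'a) \<Rightarrow> 'b \<Rightarrow> 'a"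
  by (rule vector_space_fscale)

interpretation fs_pair: vector_space_pair
  "fscale :: 'a::field \<Rightarrow> ('b \<Rightarrow> 'a) \<Rightarrow> 'b \<Rightarrow> 'a" "fscale :: 'a \<Rightarrow> ('c \<Rightarrow> 'a) \<Rightarrow> 'c \<Rightarrow> 'a"
  by unfold_locales

lemma Fsubspace_imp_subspace: "Fsubspace S U \<Longrightarrow> fs.subspace S"
  unfolding Fsubspace_def fs.subspace_def
  by (auto simp: fscale_def zero_fun_def plus_fun_def)

lemma Fsubspace_subset: "Fsubspace S U \<Longrightarrow> S \<subseteq> U"
  by (simp add: Fsubspace_def)

subsection \<open>Counting vectors over a finite field\<close>

lemma card_span_independent:
  fixes S :: "('b \<Rightarrow> 'a::{field,finite}) set"
  assumes fin: "finite S" and ind: "fs.independent S"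
  shows "card (fs.span S) = CARD('a) ^ card S"
proof -
  let ?comb = "\<lambda>u. \<Sum>v\<in>S. fscale (u v) v"
  have "bij_betw ?comb (S \<rightarrow>\<^sub>E UNIV) (fs.span S)"
  proof (rule bij_betwI')
    fix u u' :: "('b \<Rightarrow> 'a) \<Rightarrow> 'a" assume u: "u \<in> S \<rightarrow>\<^sub>E UNIV" and u': "u' \<in> S \<rightarrow>\<^sub>E UNIV"
    show "?comb u = ?comb u' \<longleftrightarrow> u = u'"
    proof
      assume eq: "?comb u = ?comb u'"
      have "(\<Sum>v\<in>S. fscale (u v - u' v) v) = ?comb u - ?comb u'"
        by (simp add: fs.scale_left_diff_distrib sum_subtractf)
      with eq have zero: "(\<Sum>v\<in>S. fscale (u v - u' v) v) = 0" by simp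
      have "\<forall>v\<in>S. u v = u' v"
        using fs.independentD[OF ind fin subset_refl zero] by simp
      then show "u = u'" using PiE_ext[OF u u'] by blast
    qed simp
  next
    fix u :: "('b \<Rightarrow> 'a) \<Rightarrow> 'a"
    show "?comb u \<in> fs.span S" using fs.span_finite[OF fin] by auto
  next
    fix x assume "x \<in> fs.span S"
    then obtain u where u: "x = ?comb u" using fs.span_finite[OF fin] by auto
    have "x = ?comb (restrict u S)" unfolding u by (rule sum.cong) auto
    moreover have "restrict u S \<in> S \<rightarrow>\<^sub>E UNIV" by simp
    ultimately show "\<exists>u\<in>S \<rightarrow>\<^sub>E UNIV. x = ?comb u" by blast
  qed
  then have "card (fs.span S) = card (S \<rightarrow>\<^sub>E (UNIV :: 'a set))"
    by (rule bij_betw_same_card[symmetric])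
  then show ?thesis by (simp add: card_PiE fin)
qed

lemma card_subspace:
  fixes S :: "('b \<Rightarrow> 'a::{field,finite}) set"
  assumes "fs.subspace S" and "finite S"
  shows "card S = CARD('a) ^ Fdim S"
proof -
  obtain T where T: "T \<subseteq> S" "fs.independent T" "S \<subseteq> fs.span T" "card T = fs.dim S"
    using fs.basis_exists by blast
  have "fs.span T = S" by (rule fs.span_subspace[OF T(1,3) assms(1)])
  moreover have "finite T" using T(1) assms(2) finite_subset by blast
  ultimately show ?thesis using card_span_independent[OF _ T(2)] T(4) by (simp add: Fdim_def)
qed

lemma card_UNIV_field_gt_1: "CARD('a::{field,finite}) > 1"
proof -
  have "card {0::'a, 1} \<le> CARD('a)" by (rule card_mono) auto
  then show ?thesis by simp
qed

lemma card_eq_card_kernel_mult_card_image: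
  fixes f :: "'v::ab_group_add \<Rightarrow> 'w::ab_group_add"
  assumes fin: "finite S" and f: "additive f"
    and add: "\<And>x y. x \<in> S \<Longrightarrow> y \<in> S \<Longrightarrow> x + y \<in> S"
    and diff: "\<And>x y. x \<in> S \<Longrightarrow> y \<in> S \<Longrightarrow> x - y \<in> S"
  shows "card S = card {x\<in>S. f x = 0} * card (f ` S)"
proof -
  let ?ker = "{x\<in>S. f x = 0}"
  have fibre: "card {x\<in>S. f x = y} = card ?ker" if "y \<in> f ` S" for y
  proof -
    obtain x0 where x0: "x0 \<in> S" "y = f x0" using \<open>y \<in> f ` S\<close> by blast
    have "{x\<in>S. f x = y} = (\<lambda>z. z + x0) ` ?ker"
    proof (intro equalityI subsetI)
      fix x assume "x \<in> {x\<in>S. f x = y}"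
      then have "x - x0 \<in> ?ker" using x0 diff additive.diff[OF f] by simp
      then show "x \<in> (\<lambda>z. z + x0) ` ?ker" by (rule rev_image_eqI) simp
    qed (use x0 add additive.add[OF f] in auto)
    then show ?thesis by (simp add: card_image)
  qed
  have "card S = (\<Sum>y\<in>f ` S. card {x\<in>S. f x = y})"
    using sum.image_gen[OF fin, of "\<lambda>_. 1 :: nat" f] by simp
  also have "\<dots> = card ?ker * card (f ` S)" by (simp add: fibre)
  finally show ?thesis .
qed

lemma Fdim_kernel_add_Fdim_image:
  fixes S :: "('b \<Rightarrow> 'a::{field,finite}) set" and f :: "('b \<Rightarrow> 'a) \<Rightarrow> 'c \<Rightarrow> 'a"
  assumes S: "fs.subspace S" "finite S" and f: "Vector_Spaces.linear fscale fscale f"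
  shows "Fdim S = Fdim {x\<in>S. f x = 0} + Fdim (f ` S)"
proof -
  have "{x\<in>S. f x = 0} = S \<inter> {x. f x = 0}" by blast
  then have ker: "fs.subspace {x\<in>S. f x = 0}"
    using fs.subspace_inter[OF S(1) fs_pair.linear_subspace_kernel[OF f]] by simp
  have img: "fs.subspace (f ` S)" by (rule fs_pair.linear_subspace_image[OF f S(1)])
  have "additive f" by (rule additive.intro) (rule fs_pair.linear_add[OF f])
  then have "card S = card {x\<in>S. f x = 0} * card (f ` S)"
    by (intro card_eq_card_kernel_mult_card_image S(2) fs.subspace_add[OF S(1)] fs.subspace_diff[OF S(1)])
  also have "\<dots> = CARD('a) ^ (Fdim {x\<in>S. f x = 0} + Fdim (f ` S))"
    using ker img S(2) by (simp add: card_subspace power_add)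
  finally have "CARD('a) ^ Fdim S = CARD('a) ^ (Fdim {x\<in>S. f x = 0} + Fdim (f ` S))"
    using S by (simp add: card_subspace)
  then show ?thesis using card_UNIV_field_gt_1[where 'a='a] by (simp add: power_inject_exp)
qed

lemma card_eq_card_zeros_mult_card_UNIV:
  fixes f :: "('b \<Rightarrow> 'a::{field,finite}) \<Rightarrow> 'a"
  assumes S: "fs.subspace S" "finite S"
    and add: "\<And>x y. f (x + y) = f x + f y" and scale: "\<And>c x. f (fscale c x) = c * f x"
    and z: "z \<in> S" "f z \<noteq> 0"
  shows "card S = card {x\<in>S. f x = 0} * CARD('a)"
proof -
  have "t \<in> f ` S" for t
  proof (rule rev_image_eqI)
    show "fscale (t / f z) z \<in> S" using fs.subspace_scale[OF S(1) z(1)] .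
    show "t = f (fscale (t / f z) z)" using z(2) by (simp add: scale)
  qed
  then have "f ` S = UNIV" by blast
  moreover have "card S = card {x\<in>S. f x = 0} * card (f ` S)"
    using S by (intro card_eq_card_kernel_mult_card_image additive.intro add
        fs.subspace_add fs.subspace_diff) auto
  ultimately show ?thesis by simp
qed

subsection \<open>The ambient space and the dual code\<close>

lemma Idx_eq_Sigma: "Idx l nn = Sigma {..<l} (\<lambda>i. {..<nn i})"
  by (auto simp: Idx_def)

lemma bij_betw_restrict_Fvec:
  "bij_betw (\<lambda>x. restrict x (Idx l nn)) (Fvec l nn) (Idx l nn \<rightarrow>\<^sub>E UNIV)"
proof (rule bij_betwI')
  fix x y :: "nat \<times> nat \<Rightarrow> 'a" assume x: "x \<in> Fvec l nn" and y: "y \<in> Fvec l nn"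
  show "restrict x (Idx l nn) = restrict y (Idx l nn) \<longleftrightarrow> x = y"
  proof
    assume eq: "restrict x (Idx l nn) = restrict y (Idx l nn)"
    show "x = y"
    proof
      fix p show "x p = y p"
      proof (cases "p \<in> Idx l nn")
        case True then show ?thesis using fun_cong[OF eq, of p] by simp
      next
        case False then show ?thesis using x y unfolding Fvec_def by (cases p) auto
      qed
    qed
  qed simp
next
  fix g :: "nat \<times> nat \<Rightarrow> 'a" assume g: "g \<in> Idx l nn \<rightarrow>\<^sub>E UNIV"
  let ?x = "\<lambda>p. if p \<in> Idx l nn then g p else 0"
  have "?x \<in> Fvec l nn" by (simp add: Fvec_def)
  moreover have "g = restrict ?x (Idx l nn)"
  proof -
    have "restrict ?x (Idx l nn) = restrict g (Idx l nn)" by (rule restrict_ext) simp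
    then show ?thesis using PiE_restrict[OF g] by simp
  qed
  ultimately show "\<exists>x\<in>Fvec l nn. g = restrict x (Idx l nn)" by blast
qed simp

lemma finite_Idx: "finite (Idx l nn)"
  by (simp add: Idx_eq_Sigma)

lemma card_Idx: "card (Idx l nn) = (\<Sum>i<l. nn i)"
  by (simp add: Idx_eq_Sigma card_SigmaI)

lemma finite_Fvec: "finite (Fvec l nn :: (nat \<times> nat \<Rightarrow> 'a::{field,finite}) set)"
  by (rule bij_betw_finite[OF bij_betw_restrict_Fvec, THEN iffD2]) (simp add: finite_PiE finite_Idx)

lemma card_Fvec: "card (Fvec l nn :: (nat \<times> nat \<Rightarrow> 'a::{field,finite}) set) = CARD('a) ^ (\<Sum>i<l. nn i)"
proof -
  have "card (Fvec l nn :: (nat \<times> nat \<Rightarrow> 'a) set) = card (Idx l nn \<rightarrow>\<^sub>E (UNIV :: 'a set))"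
    by (rule bij_betw_same_card[OF bij_betw_restrict_Fvec])
  then show ?thesis by (simp add: card_PiE finite_Idx card_Idx)
qed

lemma subspace_Fvec: "fs.subspace (Fvec l nn)"
  by (simp add: fs.subspace_def Fvec_def fscale_def)

lemma dual_subset_Fvec: "dual l nn C \<subseteq> Fvec l nn"
  by (auto simp: dual_def)

definition Fdot :: "nat \<Rightarrow> (nat \<Rightarrow> nat) \<Rightarrow> (nat \<times> nat \<Rightarrow> 'a::field) \<Rightarrow> (nat \<times> nat \<Rightarrow> 'a) \<Rightarrow> 'a"
  where "Fdot l nn x y = (\<Sum>p\<in>Idx l nn. x p * y p)"

lemma dual_eq: "dual l nn C = {x\<in>Fvec l nn. \<forall>c\<in>C. Fdot l nn x c = 0}"
  by (simp add: dual_def Fdot_def)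

lemma Fdot_add_left: "Fdot l nn (x + y) z = Fdot l nn x z + Fdot l nn y z"
  by (simp add: Fdot_def distrib_right sum.distrib)

lemma Fdot_add_right: "Fdot l nn x (y + z) = Fdot l nn x y + Fdot l nn x z"
  by (simp add: Fdot_def distrib_left sum.distrib)

lemma Fdot_scale_left: "Fdot l nn (fscale a x) y = a * Fdot l nn x y"
  by (simp add: Fdot_def fscale_def sum_distrib_left mult.assoc)

lemma Fdot_scale_right: "Fdot l nn x (fscale a y) = a * Fdot l nn x y"
  by (simp add: Fdot_def fscale_def sum_distrib_left mult_ac)

lemma subspace_dual: "fs.subspace (dual l nn C)"
  unfolding fs.subspace_def
proof (intro conjI ballI allI)
  show "0 \<in> dual l nn C" by (simp add: dual_def Fvec_def)
next
  fix x y assume "x \<in> dual l nn C" "y \<in> dual l nn C"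
  then show "x + y \<in> dual l nn C"
    by (simp add: dual_def Fvec_def distrib_right sum.distrib)
next
  fix a x assume "x \<in> dual l nn C"
  then show "fscale a x \<in> dual l nn C"
    by (simp add: dual_def Fvec_def fscale_def mult.assoc flip: sum_distrib_left)
qed

lemma card_zeros_Fdot_mult_card_UNIV:
  fixes c :: "nat \<times> nat \<Rightarrow> 'a::{field,finite}"
  assumes c: "c \<in> Fvec l nn" "c \<noteq> 0"
  shows "card {x\<in>Fvec l nn. Fdot l nn x c = 0} * CARD('a) = card (Fvec l nn :: (nat \<times> nat \<Rightarrow> 'a) set)"
proof -
  obtain p where p: "c p \<noteq> 0" using c(2) by (auto simp: fun_eq_iff)
  then have p_Idx: "p \<in> Idx l nn" using c(1) unfolding Fvec_def by blast
  define e where "e r = (if r = p then 1 else 0 :: 'a)" for r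
  have e_Fvec: "e \<in> Fvec l nn" using p_Idx by (simp add: Fvec_def e_def)
  have "Fdot l nn e c = (\<Sum>r\<in>Idx l nn. if r = p then c r else 0)"
    unfolding Fdot_def e_def by (rule sum.cong) auto
  then have "Fdot l nn e c \<noteq> 0" using p p_Idx finite_Idx by simp
  then show ?thesis
    using card_eq_card_zeros_mult_card_UNIV[where f = "\<lambda>x. Fdot l nn x c",
        OF subspace_Fvec finite_Fvec Fdot_add_left Fdot_scale_left e_Fvec] by simp
qed

lemma sum_card_orth_codewords:
  fixes C :: "(nat \<times> nat \<Rightarrow> 'a::{field,finite}) set"
  assumes C: "Fsubspace C (Fvec l nn)"
  shows "CARD('a) * (\<Sum>x\<in>Fvec l nn. card {c\<in>C. Fdot l nn x c = 0})
    = card (Fvec l nn - dual l nn C) * card C + CARD('a) * card (dual l nn C) * card C"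
proof -
  have sub_C: "fs.subspace C" by (rule Fsubspace_imp_subspace[OF C])
  have fin_C: "finite C" using finite_subset[OF Fsubspace_subset[OF C] finite_Fvec] .
  have "(\<Sum>x\<in>Fvec l nn. CARD('a) * card {c\<in>C. Fdot l nn x c = 0})
      = (\<Sum>x\<in>Fvec l nn - dual l nn C. CARD('a) * card {c\<in>C. Fdot l nn x c = 0})
        + (\<Sum>x\<in>dual l nn C. CARD('a) * card {c\<in>C. Fdot l nn x c = 0})"
    by (rule sum.subset_diff[OF dual_subset_Fvec finite_Fvec])
  also have "\<dots> = (\<Sum>x\<in>Fvec l nn - dual l nn C. card C) + (\<Sum>x\<in>dual l nn C. CARD('a) * card C)"
  proof (intro arg_cong2[where f = "(+)"] sum.cong refl)
    fix x assume "x \<in> Fvec l nn - dual l nn C"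
    then obtain c where "c \<in> C" "Fdot l nn x c \<noteq> 0" by (auto simp: dual_eq)
    then show "CARD('a) * card {c\<in>C. Fdot l nn x c = 0} = card C"
      using card_eq_card_zeros_mult_card_UNIV[where f = "Fdot l nn x",
          OF sub_C fin_C Fdot_add_right Fdot_scale_right]
      by (simp add: mult.commute)
  next
    fix x assume "x \<in> dual l nn C"
    then have "{c\<in>C. Fdot l nn x c = 0} = C" by (auto simp: dual_eq)
    then show "CARD('a) * card {c\<in>C. Fdot l nn x c = 0} = CARD('a) * card C" by simp
  qed
  finally show ?thesis by (simp add: sum_distrib_left)
qed

lemma sum_card_orth_words:
  fixes C :: "(nat \<times> nat \<Rightarrow> 'a::{field,finite}) set"
  assumes C: "Fsubspace C (Fvec l nn)"
  shows "CARD('a) * (\<Sum>c\<in>C. card {x\<in>Fvec l nn. Fdot l nn x c = 0})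
    = CARD('a) * card (Fvec l nn :: (nat \<times> nat \<Rightarrow> 'a) set)
      + card (C - {0}) * card (Fvec l nn :: (nat \<times> nat \<Rightarrow> 'a) set)"
proof -
  have fin_C: "finite C" using finite_subset[OF Fsubspace_subset[OF C] finite_Fvec] .
  have zero_C: "0 \<in> C" by (rule fs.subspace_0[OF Fsubspace_imp_subspace[OF C]])
  have "(\<Sum>c\<in>C. CARD('a) * card {x\<in>Fvec l nn. Fdot l nn x c = 0})
      = CARD('a) * card {x\<in>Fvec l nn. Fdot l nn x (0 :: nat \<times> nat \<Rightarrow> 'a) = 0}
        + (\<Sum>c\<in>C - {0}. CARD('a) * card {x\<in>Fvec l nn. Fdot l nn x c = 0})"
    by (rule sum.remove[OF fin_C zero_C])
  also have "\<dots> = CARD('a) * card (Fvec l nn :: (nat \<times> nat \<Rightarrow> 'a) set)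
      + (\<Sum>c\<in>C - {0}. card (Fvec l nn :: (nat \<times> nat \<Rightarrow> 'a) set))"
  proof (intro arg_cong2[where f = "(+)"] sum.cong refl)
    fix c assume "c \<in> C - {0}"
    then show "CARD('a) * card {x\<in>Fvec l nn. Fdot l nn x c = 0}
        = card (Fvec l nn :: (nat \<times> nat \<Rightarrow> 'a) set)"
      using card_zeros_Fdot_mult_card_UNIV[of c l nn] Fsubspace_subset[OF C]
      by (auto simp: mult.commute)
  qed (simp add: Fdot_def)
  finally show ?thesis by (simp add: sum_distrib_left)
qed

lemma card_dual_mult_card:
  fixes C :: "(nat \<times> nat \<Rightarrow> 'a::{field,finite}) set"
  assumes C: "Fsubspace C (Fvec l nn)"
  shows "card (dual l nn C) * card C = card (Fvec l nn :: (nat \<times> nat \<Rightarrow> 'a) set)"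
proof -
  define V where "V = (Fvec l nn :: (nat \<times> nat \<Rightarrow> 'a) set)"
  define q w d a where "q = CARD('a)" and "w = card (V - dual l nn C)"
    and "d = card (dual l nn C)" and "a = card (C - {0})"
  have fin_V: "finite V" by (simp add: V_def finite_Fvec)
  have fin_C: "finite C" using finite_subset[OF Fsubspace_subset[OF C] finite_Fvec] .
  have "(\<Sum>x\<in>V. card {c\<in>C. Fdot l nn x c = 0}) = (\<Sum>c\<in>C. card {x\<in>V. Fdot l nn x c = 0})"
    using sum.swap_restrict[OF fin_V fin_C, of "\<lambda>_ _. 1 :: nat"] by simp
  then have double_count: "w * card C + q * d * card C = q * card V + a * card V"
    using sum_card_orth_codewords[OF C] sum_card_orth_words[OF C]
    by (simp add: V_def q_def w_def d_def a_def)
  have fin_D: "finite (dual l nn C)" using finite_subset[OF dual_subset_Fvec finite_Fvec] .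
  have card_V: "card V = w + d"
    using card_Diff_subset[OF fin_D dual_subset_Fvec] card_mono[OF finite_Fvec dual_subset_Fvec[of l nn C]]
    by (simp add: V_def w_def d_def)
  have card_C: "card C = Suc a"
    using card.remove[OF fin_C fs.subspace_0[OF Fsubspace_imp_subspace[OF C]]] by (simp add: a_def)
  have "w + q * (d * a) = q * w + d * a"
    using double_count unfolding card_V card_C by (simp add: algebra_simps)
  then have "int (w + q * (d * a)) = int (q * w + d * a)" by (rule arg_cong)
  then have "(int q - 1) * (int w - int (d * a)) = 0" by (simp add: algebra_simps)
  then have "int w = int (d * a)" using card_UNIV_field_gt_1[where 'a='a] by (simp add: q_def)
  then have "w = d * a" by (simp only: of_nat_eq_iff)
  then have "card (dual l nn C) * card C = card V" by (simp add: card_V card_C d_def)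
  then show ?thesis by (simp add: V_def)
qed

lemma Fdim_dual:
  fixes C :: "(nat \<times> nat \<Rightarrow> 'a::{field,finite}) set"
  assumes C: "Fsubspace C (Fvec l nn)"
  shows "Fdim (dual l nn C) + Fdim C = (\<Sum>i<l. nn i)"
proof -
  have fin_D: "finite (dual l nn C)" using finite_subset[OF dual_subset_Fvec finite_Fvec] .
  have fin_C: "finite C" using finite_subset[OF Fsubspace_subset[OF C] finite_Fvec] .
  have "CARD('a) ^ (Fdim (dual l nn C) + Fdim C) = card (dual l nn C) * card C"
    by (simp add: power_add card_subspace[OF subspace_dual fin_D]
        card_subspace[OF Fsubspace_imp_subspace[OF C] fin_C])
  also have "\<dots> = CARD('a) ^ (\<Sum>i<l. nn i)" by (simp add: card_dual_mult_card[OF C] card_Fvec)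
  finally show ?thesis using card_UNIV_field_gt_1[where 'a='a] by (simp add: power_inject_exp)
qed

subsection \<open>Coordinates over a subfield\<close>

lemma subfield_mult: "subfield K \<Longrightarrow> x \<in> K \<Longrightarrow> y \<in> K \<Longrightarrow> x * y \<in> K"
  by (simp add: subfield_def)

lemma subfield_diff: "subfield K \<Longrightarrow> x \<in> K \<Longrightarrow> y \<in> K \<Longrightarrow> x - y \<in> K"
  unfolding subfield_def by (metis diff_conv_add_uminus)

lemma subfield_sum:
  assumes K: "subfield K" and f: "\<And>x. x \<in> S \<Longrightarrow> f x \<in> K"
  shows "sum f S \<in> K"
proof (cases "finite S")
  case True
  then show ?thesis using f
    by (induction S rule: finite_induct) (use K in \<open>auto simp: subfield_def\<close>)
next
  case False
  then show ?thesis using K by (simp add: subfield_def)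
qed

lemma is_Kbasis_F_coeff_eq_0:
  assumes "is_Kbasis_F K b M" and "\<forall>r. c r \<in> K" and "(\<Sum>r<M. c r * b r) = 0" and "r < M"
  shows "c r = 0"
  using assms unfolding is_Kbasis_F_def by blast

lemma
  assumes K: "subfield K" and b: "is_Kbasis_F K b M"
  shows coord_in_subfield: "coord K b M x r \<in> K"
    and sum_coord: "(\<Sum>r<M. coord K b M x r * b r) = x"
proof -
  let ?P = "\<lambda>a. (\<forall>r. a r \<in> K) \<and> (\<forall>r\<ge>M. a r = 0) \<and> x = (\<Sum>r<M. a r * b r)"
  obtain a where a: "\<forall>r. a r \<in> K" "x = (\<Sum>r<M. a r * b r)"
    using b unfolding is_Kbasis_F_def by blast
  let ?a = "\<lambda>r. if r < M then a r else 0"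
  have P_a: "?P ?a" using a K by (auto simp: subfield_def intro!: sum.cong)
  have unique: "a' = ?a" if P_a': "?P a'" for a'
  proof
    fix r
    have "(\<Sum>r<M. (a' r - ?a r) * b r) = 0"
      using P_a P_a' by (simp add: algebra_simps sum_subtractf)
    moreover have "\<forall>r. a' r - ?a r \<in> K" using P_a P_a' subfield_diff[OF K] by blast
    ultimately have "a' r - ?a r = 0" if "r < M"
      using is_Kbasis_F_coeff_eq_0[OF b _ _ that, where c = "\<lambda>r. a' r - ?a r"] by simp
    then show "a' r = ?a r" using P_a P_a' by (cases "r < M") auto
  qed
  have "?P (coord K b M x)" unfolding coord_def by (rule theI[of ?P, OF P_a unique])
  then show "coord K b M x r \<in> K" "(\<Sum>r<M. coord K b M x r * b r) = x" by auto
qed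

lemma sum_mult_eq_sum_Gamma:
  assumes K: "subfield K" and b: "is_Kbasis_F K b M"
  shows "(\<Sum>j<n. v j * w j) = (\<Sum>\<rho><M. (\<Sum>j<n. Gamma K b M n v \<rho> j * w j) * b \<rho>)"
proof -
  have "(\<Sum>j<n. v j * w j) = (\<Sum>j<n. \<Sum>\<rho><M. Gamma K b M n v \<rho> j * w j * b \<rho>)"
  proof (rule sum.cong[OF refl])
    fix j assume "j \<in> {..<n}"
    then have "(\<Sum>\<rho><M. Gamma K b M n v \<rho> j * b \<rho>) = (\<Sum>\<rho><M. coord K b M (v j) \<rho> * b \<rho>)"
      by (intro sum.cong) (auto simp: Gamma_def)
    then have "v j = (\<Sum>\<rho><M. Gamma K b M n v \<rho> j * b \<rho>)" by (simp add: sum_coord[OF K b])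
    then show "v j * w j = (\<Sum>\<rho><M. Gamma K b M n v \<rho> j * w j * b \<rho>)"
      by (simp add: sum_distrib_left sum_distrib_right mult_ac)
  qed
  also have "\<dots> = (\<Sum>\<rho><M. \<Sum>j<n. Gamma K b M n v \<rho> j * w j * b \<rho>)" by (rule sum.swap)
  also have "\<dots> = (\<Sum>\<rho><M. (\<Sum>j<n. Gamma K b M n v \<rho> j * w j) * b \<rho>)"
    by (simp add: sum_distrib_right)
  finally show ?thesis .
qed

subsection \<open>Orthogonality of row spaces\<close>

lemma row_in_rowspace:
  fixes A :: "nat \<Rightarrow> nat \<Rightarrow> 'a::field"
  assumes K: "subfield K" and r: "r < N"
  shows "A r \<in> rowspace K N A"
proof -
  let ?a = "\<lambda>s. if s = r then 1 else 0 :: 'a"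
  have "(\<Sum>s<N. ?a s * A s j) = (\<Sum>s<N. if s = r then A s j else 0)" for j
    by (rule sum.cong) auto
  then have "(\<forall>s. ?a s \<in> K) \<and> A r = (\<lambda>j. \<Sum>s<N. ?a s * A s j)"
    using K r by (simp add: subfield_def)
  then show ?thesis unfolding rowspace_def mem_Collect_eq by (rule exI[of _ ?a])
qed

lemma rowspace_subset_Korth_rowspace_iff:
  fixes A G :: "nat \<Rightarrow> nat \<Rightarrow> 'a::field"
  assumes K: "subfield K"
    and G_mem: "\<And>\<rho> j. G \<rho> j \<in> K" and G_zero: "\<And>\<rho> j. n \<le> j \<Longrightarrow> G \<rho> j = 0"
  shows "rowspace K M G \<subseteq> Korth K n (rowspace K N A) \<longleftrightarrow>
    (\<forall>\<rho><M. \<forall>r<N. (\<Sum>j<n. G \<rho> j * A r j) = 0)"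
proof
  assume sub: "rowspace K M G \<subseteq> Korth K n (rowspace K N A)"
  show "\<forall>\<rho><M. \<forall>r<N. (\<Sum>j<n. G \<rho> j * A r j) = 0"
  proof (intro allI impI)
    fix \<rho> r assume "\<rho> < M" "r < N"
    then have "G \<rho> \<in> Korth K n (rowspace K N A)" "A r \<in> rowspace K N A"
      using sub row_in_rowspace[OF K] by auto
    then show "(\<Sum>j<n. G \<rho> j * A r j) = 0" by (simp add: Korth_def)
  qed
next
  assume orth: "\<forall>\<rho><M. \<forall>r<N. (\<Sum>j<n. G \<rho> j * A r j) = 0"
  show "rowspace K M G \<subseteq> Korth K n (rowspace K N A)"
  proof
    fix w assume "w \<in> rowspace K M G"
    then obtain \<alpha> where \<alpha>: "\<forall>\<rho>. \<alpha> \<rho> \<in> K" and w: "w = (\<lambda>j. \<Sum>\<rho><M. \<alpha> \<rho> * G \<rho> j)"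
      by (auto simp: rowspace_def)
    have "w j \<in> K" for j
      unfolding w by (intro subfield_sum[OF K] subfield_mult[OF K] G_mem \<alpha>[rule_format])
    moreover have "w j = 0" if "n \<le> j" for j using that by (simp add: w G_zero)
    moreover have "(\<Sum>j<n. w j * v j) = 0" if v_row: "v \<in> rowspace K N A" for v
    proof -
      obtain \<beta> where v: "v = (\<lambda>j. \<Sum>r<N. \<beta> r * A r j)"
        using v_row by (auto simp: rowspace_def)
      have "(\<Sum>j<n. w j * v j) = (\<Sum>j<n. \<Sum>\<rho><M. \<Sum>r<N. (\<alpha> \<rho> * G \<rho> j) * (\<beta> r * A r j))"
        unfolding w v by (simp only: sum_product)
      also have "\<dots> = (\<Sum>\<rho><M. \<Sum>j<n. \<Sum>r<N. (\<alpha> \<rho> * G \<rho> j) * (\<beta> r * A r j))"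
        by (rule sum.swap)
      also have "\<dots> = (\<Sum>\<rho><M. \<Sum>r<N. \<Sum>j<n. (\<alpha> \<rho> * G \<rho> j) * (\<beta> r * A r j))"
        by (rule sum.cong[OF refl], rule sum.swap)
      also have "\<dots> = (\<Sum>\<rho><M. \<Sum>r<N. \<alpha> \<rho> * \<beta> r * (\<Sum>j<n. G \<rho> j * A r j))"
        by (simp only: sum_distrib_left mult_ac)
      also have "\<dots> = 0" using orth by simp
      finally show ?thesis .
    qed
    ultimately show "w \<in> Korth K n (rowspace K N A)" by (simp add: Korth_def Kvec_def)
  qed
qed

lemma rowspace_Gamma_subset_Korth_iff:
  assumes K: "subfield K" and b: "is_Kbasis_F K b M" and A: "is_gen_matrix K n V N A"
  shows "rowspace K M (Gamma K b M n v) \<subseteq> Korth K n V \<longleftrightarrow> (\<forall>r<N. (\<Sum>j<n. v j * A r j) = 0)"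
proof -
  let ?G = "Gamma K b M n v"
  have G_mem: "?G \<rho> j \<in> K" for \<rho> j
    using coord_in_subfield[OF K b] K by (simp add: Gamma_def subfield_def)
  have G_zero: "?G \<rho> j = 0" if "n \<le> j" for \<rho> j
    using that by (simp add: Gamma_def)
  have rows_orth_iff: "(\<forall>\<rho><M. (\<Sum>j<n. ?G \<rho> j * A r j) = 0) \<longleftrightarrow> (\<Sum>j<n. v j * A r j) = 0"
    if r: "r < N" for r
  proof -
    have expand: "(\<Sum>j<n. v j * A r j) = (\<Sum>\<rho><M. (\<Sum>j<n. ?G \<rho> j * A r j) * b \<rho>)"
      by (rule sum_mult_eq_sum_Gamma[OF K b])
    have "\<forall>\<rho>. (\<Sum>j<n. ?G \<rho> j * A r j) \<in> K"
      using A r G_mem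
      by (intro allI subfield_sum[OF K] subfield_mult[OF K]) (auto simp: is_gen_matrix_def Kvec_def)
    then show ?thesis
      using is_Kbasis_F_coeff_eq_0[OF b] expand by auto
  qed
  have "V = rowspace K N A" using A by (simp add: is_gen_matrix_def)
  then show ?thesis
    using rowspace_subset_Korth_rowspace_iff[OF K G_mem G_zero] rows_orth_iff by auto
qed

subsection \<open>The projection Pi_L\<close>

lemma linear_PiL: "Vector_Spaces.linear fscale fscale (PiL l nn N A)"
  by (auto simp: Vector_Spaces.linear_iff vector_space_fscale PiL_def fscale_def fun_eq_iff
      distrib_right sum.distrib sum_distrib_left mult.assoc)

lemma PiL_eq_0_iff:
  "PiL l nn N A x = 0 \<longleftrightarrow> (\<forall>i<l. \<forall>r<N i. (\<Sum>j<nn i. x (i, j) * A i r j) = 0)"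
  by (auto simp: PiL_def fun_eq_iff)

lemma CL_eq_kernel_PiL:
  assumes "\<forall>i<l. subfield (K i)" and "\<forall>i<l. is_Kbasis_F (K i) (B i) (m i)"
    and "\<forall>i<l. is_gen_matrix (K i) (nn i) (L i) (N i) (A i)"
  shows "CL l nn K B m C L = {x\<in>dual l nn C. PiL l nn N A x = 0}"
proof -
  have "supp_i K B m nn x i \<subseteq> Korth (K i) (nn i) (L i) \<longleftrightarrow>
      (\<forall>r<N i. (\<Sum>j<nn i. x (i, j) * A i r j) = 0)" if "i < l" for x i
    unfolding supp_i_def block_def
    by (rule rowspace_Gamma_subset_Korth_iff) (use that assms in auto)
  then show ?thesis by (auto simp: CL_def PiL_eq_0_iff)
qed

theorem mainTheorem4:
  fixes l :: nat and nn :: "nat \<Rightarrow> nat"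
    and K :: "nat \<Rightarrow> ('a::{field,finite}) set"
    and m :: "nat \<Rightarrow> nat" and B :: "nat \<Rightarrow> nat \<Rightarrow> 'a"
    and C :: "(nat \<times> nat \<Rightarrow> 'a) set" and k :: nat
    and L :: "nat \<Rightarrow> (nat \<Rightarrow> 'a) set"
    and N :: "nat \<Rightarrow> nat" and A :: "nat \<Rightarrow> nat \<Rightarrow> nat \<Rightarrow> 'a"
  assumes "l \<ge> 1"
    and "\<forall>i<l. nn i \<ge> 1"
    and "\<forall>i<l. subfield (K i)"
    and "\<forall>i<l. is_Kbasis_F (K i) (B i) (m i)"
    and "Fsubspace C (Fvec l nn)"
    and "Fdim C = k"
    and "\<forall>i<l. Ksubspace (K i) (nn i) (L i)"
    and "\<forall>i<l. is_gen_matrix (K i) (nn i) (L i) (N i) (A i)"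
  shows "mu l nn K B m C L + rho l nn N A C = (\<Sum>i<l. nn i) - k"
proof -
  let ?D = "dual l nn C" and ?P = "PiL l nn N A"
  have "finite ?D" using finite_subset[OF dual_subset_Fvec finite_Fvec] .
  then have "Fdim ?D = Fdim {x\<in>?D. ?P x = 0} + Fdim (?P ` ?D)"
    by (rule Fdim_kernel_add_Fdim_image[OF subspace_dual _ linear_PiL])
  then have "Fdim ?D = mu l nn K B m C L + rho l nn N A C"
    using CL_eq_kernel_PiL[OF assms(3,4,8)] by (simp add: mu_def rho_def)
  moreover have "Fdim ?D + k = (\<Sum>i<l. nn i)" using Fdim_dual[OF assms(5)] assms(6) by simp
  ultimately show ?thesis by simp
qed

end
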